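(* Consider the switched system $x(t+1)=Ax(t)+\sigma(t)Bu(t)$ with $A\in\mathbb{R}^{n\times n}$ invertible, $B\in\mathbb{R}^{n\times m}$, and switching signal $\sigma$ ranging over the admissible signals $\mathcal{L}(\mathcal{A})$ of a given automaton $\mathcal{A}$. Suppose this system is controllable, fix an initial condition $x(0)\in\mathbb{R}^n$, and suppose the time-optimal control problem below is feasible. For $\sigma\in\mathcal{L}(\mathcal{A})$ let $t_\sigma$ be the optimal (least) time $t$ for which there exists $\bar u=(u(0)^{\mathsf T},\ldots,u(t)^{\mathsf T})^{\mathsf T}$ with $|u_i(j)|\le 1$ for all $i,j$ and $0=A^{t}x(0)+C_{\sigma(t)}(A,B)\bar u$. If $\sigma_1,\sigma_2\in\mathcal{L}(\mathcal{A})$ satisfy $\sigma_1\preceq\sigma_2$, then $t_{\sigma_1}\ge t_{\sigma_2}$.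
   Context: An automaton $\mathcal{A}$ is a directed graph whose edges are labeled by $0$ or $1$; a binary sequence is admissible if it is the succession of labels along some path in the graph, and $\mathcal{L}(\mathcal{A})$ denotes the set of admissible sequences. For a switching signal $\sigma$, $C_{\sigma(t)}(A,B)=\begin{bmatrix}\sigma(0)A^tB & \cdots & \sigma(t-1)AB & \sigma(t)B\end{bmatrix}$. The system is controllable if for every $\sigma\in\mathcal{L}(\mathcal{A})$, every initial state $x_0\in\mathbb{R}^n$ and every final state $x_f\in\mathbb{R}^n$ there is an input $u:\mathbb{N}\to\mathbb{R}^m$ with $x(t_\sigma)=x_f$ for some $t_\sigma\in\mathbb{N}$. Partial order: $\sigma_1\preceq\sigma_2$ if for every $i$ with $\sigma_1(i)=1$ we also have $\sigma_2(i)=1$. *)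

theory Defs
  imports "HOL-Analysis.Analysis"
begin

definition automaton :: "('q \<times> nat \<times> 'q) set \<Rightarrow> bool" where
  "automaton E \<longleftrightarrow> finite E \<and> (\<forall>(q, l, q')\<in>E. l \<in> {0, 1})"

definition admissible :: "('q \<times> nat \<times> 'q) set \<Rightarrow> (nat \<Rightarrow> nat) set" where
  "admissible E = {\<sigma>. \<exists>p :: nat \<Rightarrow> 'q. \<forall>i. (p i, \<sigma> i, p (Suc i)) \<in> E}"

fun mat_pow :: "real^'n^'n \<Rightarrow> nat \<Rightarrow> real^'n^'n" where
  "mat_pow A 0 = mat 1"
| "mat_pow A (Suc k) = A ** mat_pow A k"

fun traj :: "real^'n^'n \<Rightarrow> real^'m^'n \<Rightarrow> (nat \<Rightarrow> nat) \<Rightarrow> real^'n \<Rightarrow> (nat \<Rightarrow> real^'m) \<Rightarrow> nat \<Rightarrow> real^'n" where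
  "traj A B \<sigma> x0 u 0 = x0"
| "traj A B \<sigma> x0 u (Suc t) = A *v traj A B \<sigma> x0 u t + of_nat (\<sigma> t) *s (B *v u t)"

definition controllable :: "('q \<times> nat \<times> 'q) set \<Rightarrow> real^'n^'n \<Rightarrow> real^'m^'n \<Rightarrow> bool" where
  "controllable E A B \<longleftrightarrow>
     (\<forall>\<sigma>\<in>admissible E. \<forall>x0 xf. \<exists>u. \<exists>t. traj A B \<sigma> x0 u t = xf)"

text \<open>C_{sigma(t)}(A,B) applied to the stacked input (u(0),...,u(t)):
  sum over j = 0..t of sigma(j) A^(t-j) B u(j).\<close>
definition ctrb_apply :: "real^'n^'n \<Rightarrow> real^'m^'n \<Rightarrow> (nat \<Rightarrow> nat) \<Rightarrow> nat \<Rightarrow> (nat \<Rightarrow> real^'m) \<Rightarrow> real^'n" where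
  "ctrb_apply A B \<sigma> t u = (\<Sum>j\<le>t. of_nat (\<sigma> j) *s ((mat_pow A (t - j) ** B) *v u j))"

definition to_feasible :: "real^'n^'n \<Rightarrow> real^'m^'n \<Rightarrow> (nat \<Rightarrow> nat) \<Rightarrow> real^'n \<Rightarrow> nat \<Rightarrow> bool" where
  "to_feasible A B \<sigma> x0 t \<longleftrightarrow>
     (\<exists>u. (\<forall>j\<le>t. \<forall>i. \<bar>u j $ i\<bar> \<le> 1) \<and> 0 = mat_pow A t *v x0 + ctrb_apply A B \<sigma> t u)"

definition t_opt :: "real^'n^'n \<Rightarrow> real^'m^'n \<Rightarrow> (nat \<Rightarrow> nat) \<Rightarrow> real^'n \<Rightarrow> nat" where
  "t_opt A B \<sigma> x0 = (LEAST t. to_feasible A B \<sigma> x0 t)"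

definition sig_le :: "(nat \<Rightarrow> nat) \<Rightarrow> (nat \<Rightarrow> nat) \<Rightarrow> bool" where
  "sig_le \<sigma>1 \<sigma>2 \<longleftrightarrow> (\<forall>i. \<sigma>1 i = 1 \<longrightarrow> \<sigma>2 i = 1)"

end

theory Submission
  imports Defs
begin

text \<open>An input that is feasible for \<open>\<sigma>\<^sub>1\<close> can be masked by \<open>\<sigma>\<^sub>1\<close> itself without
  changing its effect; since \<open>\<sigma>\<^sub>2\<close> is active whenever \<open>\<sigma>\<^sub>1\<close> is, the masked input
  has the same effect under \<open>\<sigma>\<^sub>2\<close> and still respects the bound \<open>\<bar>u\<^sub>i(j)\<bar> \<le> 1\<close>.
  Hence every time feasible for \<open>\<sigma>\<^sub>1\<close> is feasible for \<open>\<sigma>\<^sub>2\<close>, and the least one can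
  only decrease.\<close>

lemma admissible_label_01:
  assumes "automaton E" and "\<sigma> \<in> admissible E"
  shows "\<sigma> i \<in> {0, 1}"
proof -
  obtain p where "(p i, \<sigma> i, p (Suc i)) \<in> E"
    using assms(2) unfolding admissible_def by blast
  then show ?thesis
    using assms(1) unfolding automaton_def by fastforce
qed

lemma sig_le_mult_eq:
  assumes "\<sigma>\<^sub>1 j \<in> {0, 1}" and "sig_le \<sigma>\<^sub>1 \<sigma>\<^sub>2"
  shows "\<sigma>\<^sub>2 j * \<sigma>\<^sub>1 j = \<sigma>\<^sub>1 j"
  using assms unfolding sig_le_def by auto

lemma ctrb_apply_masked_input:
  fixes A :: "real^'n^'n" and B :: "real^'m^'n" and u :: "nat \<Rightarrow> real^'m"
  assumes "\<And>j. \<sigma>\<^sub>2 j * \<sigma>\<^sub>1 j = \<sigma>\<^sub>1 j"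
  shows "ctrb_apply A B \<sigma>\<^sub>2 t (\<lambda>j. of_nat (\<sigma>\<^sub>1 j) *s u j) = ctrb_apply A B \<sigma>\<^sub>1 t u"
proof -
  have "of_nat (\<sigma>\<^sub>2 j) *s (M *v (of_nat (\<sigma>\<^sub>1 j) *s u j)) = of_nat (\<sigma>\<^sub>1 j) *s (M *v u j)"
    for j and M :: "real^'m^'n"
  proof -
    have "(of_nat (\<sigma>\<^sub>2 j) :: real) * of_nat (\<sigma>\<^sub>1 j) = of_nat (\<sigma>\<^sub>1 j)"
      by (metis assms of_nat_mult)
    then show ?thesis
      by (simp add: vector_scalar_commute vector_smult_assoc)
  qed
  then show ?thesis
    unfolding ctrb_apply_def by simp
qed

lemma to_feasible_sig_le:
  assumes "\<And>j. \<sigma>\<^sub>1 j \<in> {0, 1}" and "sig_le \<sigma>\<^sub>1 \<sigma>\<^sub>2"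
    and "to_feasible A B \<sigma>\<^sub>1 x0 t"
  shows "to_feasible A B \<sigma>\<^sub>2 x0 t"
proof -
  obtain u where bound: "\<forall>j\<le>t. \<forall>i. \<bar>u j $ i\<bar> \<le> 1"
    and reach: "0 = mat_pow A t *v x0 + ctrb_apply A B \<sigma>\<^sub>1 t u"
    using assms(3) unfolding to_feasible_def by blast
  define v where "v j = of_nat (\<sigma>\<^sub>1 j) *s u j" for j
  have "\<forall>j\<le>t. \<forall>i. \<bar>v j $ i\<bar> \<le> 1"
  proof (intro allI impI)
    fix j i
    assume "j \<le> t"
    then show "\<bar>v j $ i\<bar> \<le> 1"
      using bound assms(1)[of j] unfolding v_def by auto
  qed
  moreover have "ctrb_apply A B \<sigma>\<^sub>2 t v = ctrb_apply A B \<sigma>\<^sub>1 t u"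
    unfolding v_def
    by (rule ctrb_apply_masked_input) (rule sig_le_mult_eq[OF assms(1,2)])
  ultimately show ?thesis
    unfolding to_feasible_def using reach by metis
qed

lemma t_opt_sig_le:
  assumes "\<And>j. \<sigma>\<^sub>1 j \<in> {0, 1}" and "sig_le \<sigma>\<^sub>1 \<sigma>\<^sub>2"
    and "\<exists>t. to_feasible A B \<sigma>\<^sub>1 x0 t"
  shows "t_opt A B \<sigma>\<^sub>2 x0 \<le> t_opt A B \<sigma>\<^sub>1 x0"
proof -
  have "to_feasible A B \<sigma>\<^sub>1 x0 (t_opt A B \<sigma>\<^sub>1 x0)"
    unfolding t_opt_def using assms(3) by (rule LeastI_ex)
  then have "to_feasible A B \<sigma>\<^sub>2 x0 (t_opt A B \<sigma>\<^sub>1 x0)"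
    by (rule to_feasible_sig_le[OF assms(1,2)])
  then show ?thesis
    unfolding t_opt_def by (rule Least_le)
qed

theorem mainTheorem2:
  fixes E :: "('q \<times> nat \<times> 'q) set"
    and A :: "real^'n^'n" and B :: "real^'m^'n" and x0 :: "real^'n"
    and \<sigma>1 \<sigma>2 :: "nat \<Rightarrow> nat"
  assumes "automaton E"
    and "invertible A"
    and "controllable E A B"
    and "\<forall>\<sigma>\<in>admissible E. \<exists>t. to_feasible A B \<sigma> x0 t"
    and "\<sigma>1 \<in> admissible E" and "\<sigma>2 \<in> admissible E"
    and "sig_le \<sigma>1 \<sigma>2"
  shows "t_opt A B \<sigma>1 x0 \<ge> t_opt A B \<sigma>2 x0"
proof (rule t_opt_sig_le)
  show "\<sigma>1 j \<in> {0, 1}" for j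
    using assms(1,5) by (rule admissible_label_01)
  show "sig_le \<sigma>1 \<sigma>2" by (fact assms(7))
  show "\<exists>t. to_feasible A B \<sigma>1 x0 t"
    using assms(4,5) by blast
qed

end
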